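(* For any real number $s\ge 1$ that is not an integer, $$\sum_{i=0}^{\lfloor s\rfloor+1}\binom{s}{i}<2^s+\frac{1}{4(s+1)}.$$
   Context: For real $s$ and integer $i\ge0$, $\binom{s}{i}=\frac{s(s-1)\cdots(s-i+1)}{i!}$ (with $\binom{s}{0}=1$). *)

theory Defs
  imports Complex_Main
begin

end

theory Submission
  imports Defs
begin

text \<open>
  Expand \<open>(1 + x) powr s\<close> around \<open>0\<close> up to order \<open>n + 1\<close>, where \<open>n = \<lfloor>s\<rfloor>\<close>, and evaluate
  at \<open>x = 1\<close>. The Lagrange remainder is \<open>(s gchoose (n + 2)) * (1 + \<xi>) powr (s - n - 2)\<close>
  with \<open>0 < \<xi> < 1\<close>. Its coefficient is negative, and writing \<open>t = s - n\<close> it has absolute value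
  \<open>s (s - 1) \<dots> (s - n + 1) * t (1 - t) / (n + 2)!  \<le>  (n + 1)! / 4 / (n + 2)!  =  1 / (4 (n + 2))\<close>,
  which is smaller than \<open>1 / (4 (s + 1))\<close> because \<open>s < n + 1\<close>.
\<close>

lemma has_real_derivative_falling_prod_powr:
  fixes s x :: real
  assumes "x > -1"
  shows "((\<lambda>x. (\<Prod>i = 0..<m. s - real i) * (1 + x) powr (s - real m)) has_real_derivative
          (\<Prod>i = 0..<Suc m. s - real i) * (1 + x) powr (s - real (Suc m))) (at x)"
proof -
  have "((\<lambda>x. (1 + x) powr (s - real m)) has_real_derivative
          (s - real m) * (1 + x) powr (s - real m - 1)) (at x)"
    using assms by (auto intro!: derivative_eq_intros)
  then have "((\<lambda>x. (\<Prod>i = 0..<m. s - real i) * (1 + x) powr (s - real m)) has_real_derivative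
          (\<Prod>i = 0..<m. s - real i) * ((s - real m) * (1 + x) powr (s - real m - 1))) (at x)"
    by (rule DERIV_cmult)
  moreover have "s - real m - 1 = s - real (Suc m)"
    by simp
  ultimately show ?thesis
    by (simp only: prod.atLeast0_lessThan_Suc mult.assoc)
qed

lemma powr_one_plus_Taylor_gchoose:
  fixes s x :: real
  assumes "0 < x" and "0 < N"
  shows "\<exists>\<xi>. 0 < \<xi> \<and> \<xi> < x \<and>
           (1 + x) powr s = (\<Sum>m<N. (s gchoose m) * x ^ m) + (s gchoose N) * (1 + \<xi>) powr (s - real N) * x ^ N"
proof -
  define D where "D m y = (\<Prod>i = 0..<m. s - real i) * (1 + y) powr (s - real m)" for m y
  have "\<exists>\<xi>. 0 < \<xi> \<and> \<xi> < x \<and>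
          (1 + x) powr s = (\<Sum>m<N. D m 0 / fact m * x ^ m) + D N \<xi> / fact N * x ^ N"
  proof (rule Maclaurin[OF assms])
    show "\<forall>m y. m < N \<and> 0 \<le> y \<and> y \<le> x \<longrightarrow> DERIV (D m) y :> D (Suc m) y"
      unfolding D_def[abs_def] by (intro allI impI has_real_derivative_falling_prod_powr) auto
  qed (simp add: D_def)
  then obtain \<xi> where \<xi>: "0 < \<xi>" "\<xi> < x"
    and Taylor: "(1 + x) powr s = (\<Sum>m<N. D m 0 / fact m * x ^ m) + D N \<xi> / fact N * x ^ N"
    by blast
  have D_div_fact: "D m y / fact m = (s gchoose m) * (1 + y) powr (s - real m)" if "y \<ge> 0" for m y
    using that by (simp add: D_def gbinomial_prod_rev)
  show ?thesis
    using \<xi> Taylor by (intro exI[of _ \<xi>]) (simp add: D_div_fact)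
qed

lemma prod_falling_le_fact_Suc:
  fixes s :: real
  assumes "real n \<le> s + 1" and "s \<le> real n + 1"
  shows "(\<Prod>i = 0..<n. s - real i) \<le> fact (Suc n)"
proof -
  have "(\<Prod>i = 0..<n. s - real i) \<le> (\<Prod>i = 0..<n. real (Suc n) - real i)"
    using assms by (intro prod_mono) auto
  also have "\<dots> = (real (Suc n) gchoose n) * fact n"
    by (simp only: gbinomial_mult_fact')
  also have "\<dots> = real (Suc n choose n) * fact n"
    by (simp only: binomial_gbinomial)
  also have "\<dots> = fact (Suc n)"
    by (simp add: binomial_Suc_n)
  finally show ?thesis .
qed

lemma gchoose_floor_plus_two_bounds:
  fixes s :: real
  assumes "real n \<le> s" and "s \<le> real n + 1"
  shows "s gchoose (n + 2) \<le> 0" and "- (s gchoose (n + 2)) \<le> 1 / (4 * (real n + 2))"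
proof -
  define P where "P = (\<Prod>i = 0..<n. s - real i)"
  define q where "q = (s - real n) * (real n + 1 - s)"
  have "(\<Prod>i = 0..<n + 2. s - real i) = - (P * q)"
    by (simp add: prod.atLeast0_lessThan_Suc P_def q_def algebra_simps)
  then have gchoose_eq: "s gchoose (n + 2) = - (P * q / fact (n + 2))"
    by (simp add: gbinomial_prod_rev)
  have P_nonneg: "0 \<le> P"
    unfolding P_def using assms by (intro prod_nonneg) auto
  have P_le: "P \<le> fact (n + 1)"
    using prod_falling_le_fact_Suc[of n s] assms by (simp add: P_def)
  have q_nonneg: "0 \<le> q"
    unfolding q_def using assms by simp
  have q_le: "q \<le> 1 / 4"
  proof -
    have "0 \<le> (s - real n - 1 / 2) ^ 2"
      by simp
    then show ?thesis
      unfolding q_def by (simp add: power2_eq_square algebra_simps)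
  qed
  show "s gchoose (n + 2) \<le> 0"
    unfolding gchoose_eq using P_nonneg q_nonneg by simp
  have "P * q \<le> fact (n + 1) * (1 / 4)"
    using P_nonneg P_le q_nonneg q_le by (intro mult_mono) auto
  then have "P * q / fact (n + 2) \<le> fact (n + 1) * (1 / 4) / fact (n + 2)"
    by (intro divide_right_mono) auto
  also have "\<dots> = 1 / (4 * (real n + 2))"
    by (simp add: fact_reduce[of "n + 2"] add_ac)
  finally show "- (s gchoose (n + 2)) \<le> 1 / (4 * (real n + 2))"
    unfolding gchoose_eq by simp
qed

theorem lemma2p2:
  fixes s :: real
  assumes "s \<ge> 1" and "s \<notin> \<int>"
  shows "(\<Sum>i = 0..nat \<lfloor>s\<rfloor> + 1. s gchoose i) < 2 powr s + 1 / (4 * (s + 1))"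
proof -
  define n where "n = nat \<lfloor>s\<rfloor>"
  have floor_eq: "real_of_int \<lfloor>s\<rfloor> = real n"
    using assms(1) by (simp add: n_def)
  have n_less: "real n < s"
    using assms(2) floor_eq of_int_floor_le[of s] by (metis Ints_of_nat order_less_le)
  have less_Suc_n: "s < real n + 1"
    using floor_eq real_of_int_floor_add_one_gt[of s] by linarith
  obtain \<xi> where "0 < \<xi>" "\<xi> < 1" and Taylor:
      "2 powr s = (\<Sum>m<n + 2. s gchoose m) + (s gchoose (n + 2)) * (1 + \<xi>) powr (s - real (n + 2))"
    using powr_one_plus_Taylor_gchoose[of 1 "n + 2" s] by auto
  define w where "w = (1 + \<xi>) powr (s - real (n + 2))"
  have "w \<le> (1 + \<xi>) powr 0"
    unfolding w_def using \<open>0 < \<xi>\<close> less_Suc_n by (intro powr_mono) auto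
  then have "w \<le> 1"
    using \<open>0 < \<xi>\<close> by simp
  note bounds = gchoose_floor_plus_two_bounds[OF less_imp_le[OF n_less] less_imp_le[OF less_Suc_n]]
  have "- (s gchoose (n + 2)) * w \<le> - (s gchoose (n + 2))"
    using bounds(1) \<open>w \<le> 1\<close> by (intro mult_left_le) auto
  also have "\<dots> \<le> 1 / (4 * (real n + 2))"
    by (fact bounds(2))
  also have "\<dots> < 1 / (4 * (s + 1))"
    using n_less less_Suc_n by (simp add: frac_less2)
  finally have "(\<Sum>m<n + 2. s gchoose m) < 2 powr s + 1 / (4 * (s + 1))"
    using Taylor by (simp add: w_def)
  moreover have "{0..nat \<lfloor>s\<rfloor> + 1} = {..<n + 2}"
    by (auto simp: n_def)
  ultimately show ?thesis
    by simp
qed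

end
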